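(* Let $B$ be a nilpotent finite-dimensional Leibniz algebra over a field with $\dim B\ge 2$ and $\dim R_1(B)=1$, where $R_1(B)=\{r\in B: Br=0\}$. Then there is no finite-dimensional Leibniz algebra $A$ in which $B$ is an ideal and $B\subseteq\Phi(A)$.
   Context: A (left) Leibniz algebra is an algebra satisfying $x(yz)=(xy)z+y(xz)$ for all $x,y,z$. Nilpotent means $B^t=0$ for some $t$, where $B^1=B$, $B^{j+1}=BB^j$. An ideal is a subspace $I$ with $AI\subseteq I$ and $IA\subseteq I$. $\Phi(A)$, the Frattini subalgebra, is the intersection of all maximal subalgebras of $A$. *)

theory Defs
  imports Complex_Main
begin

text \<open>An algebra over a field: an additive group 'v with a scalar multiplication
  by the field 'k (a vector space) and a bilinear product mult.  The carrier of
  the algebra is the whole type 'v.\<close>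

definition leibniz_algebra ::
  "('k::field \<Rightarrow> 'v::ab_group_add \<Rightarrow> 'v) \<Rightarrow> ('v \<Rightarrow> 'v \<Rightarrow> 'v) \<Rightarrow> bool" where
  "leibniz_algebra scale mult \<longleftrightarrow>
     vector_space scale \<and>
     (\<forall>x y z. mult (x + y) z = mult x z + mult y z) \<and>
     (\<forall>x y z. mult x (y + z) = mult x y + mult x z) \<and>
     (\<forall>c x y. mult (scale c x) y = scale c (mult x y)) \<and>
     (\<forall>c x y. mult x (scale c y) = scale c (mult x y)) \<and>
     (\<forall>x y z. mult x (mult y z) = mult (mult x y) z + mult y (mult x z))"

definition finite_dim :: "('k::field \<Rightarrow> 'v::ab_group_add \<Rightarrow> 'v) \<Rightarrow> bool" where
  "finite_dim scale \<longleftrightarrow> (\<exists>S. finite S \<and> module.span scale S = UNIV)"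

definition subalgebra ::
  "('k::field \<Rightarrow> 'v::ab_group_add \<Rightarrow> 'v) \<Rightarrow> ('v \<Rightarrow> 'v \<Rightarrow> 'v) \<Rightarrow> 'v set \<Rightarrow> bool" where
  "subalgebra scale mult S \<longleftrightarrow>
     module.subspace scale S \<and> (\<forall>x\<in>S. \<forall>y\<in>S. mult x y \<in> S)"

definition ideal ::
  "('k::field \<Rightarrow> 'v::ab_group_add \<Rightarrow> 'v) \<Rightarrow> ('v \<Rightarrow> 'v \<Rightarrow> 'v) \<Rightarrow> 'v set \<Rightarrow> bool" where
  "ideal scale mult I \<longleftrightarrow>
     module.subspace scale I \<and> (\<forall>a x. x \<in> I \<longrightarrow> mult a x \<in> I \<and> mult x a \<in> I)"

definition maximal_subalgebra ::
  "('k::field \<Rightarrow> 'v::ab_group_add \<Rightarrow> 'v) \<Rightarrow> ('v \<Rightarrow> 'v \<Rightarrow> 'v) \<Rightarrow> 'v set \<Rightarrow> bool" where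
  "maximal_subalgebra scale mult M \<longleftrightarrow>
     subalgebra scale mult M \<and> M \<noteq> UNIV \<and>
     (\<forall>S. subalgebra scale mult S \<and> M \<subseteq> S \<longrightarrow> S = M \<or> S = UNIV)"

text \<open>Frattini subalgebra: intersection of all maximal subalgebras
  (the whole algebra if there are none).\<close>
definition frattini ::
  "('k::field \<Rightarrow> 'v::ab_group_add \<Rightarrow> 'v) \<Rightarrow> ('v \<Rightarrow> 'v \<Rightarrow> 'v) \<Rightarrow> 'v set" where
  "frattini scale mult = \<Inter> {M. maximal_subalgebra scale mult M}"

fun alg_power ::
  "('k::field \<Rightarrow> 'v::ab_group_add \<Rightarrow> 'v) \<Rightarrow> ('v \<Rightarrow> 'v \<Rightarrow> 'v) \<Rightarrow> 'v set \<Rightarrow> nat \<Rightarrow> 'v set" where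
  "alg_power scale mult B 0 = B"
| "alg_power scale mult B (Suc 0) = B"
| "alg_power scale mult B (Suc (Suc j)) =
     module.span scale {mult b x | b x. b \<in> B \<and> x \<in> alg_power scale mult B (Suc j)}"

definition nilpotent_sub ::
  "('k::field \<Rightarrow> 'v::ab_group_add \<Rightarrow> 'v) \<Rightarrow> ('v \<Rightarrow> 'v \<Rightarrow> 'v) \<Rightarrow> 'v set \<Rightarrow> bool" where
  "nilpotent_sub scale mult B \<longleftrightarrow> (\<exists>t\<ge>1. alg_power scale mult B t = {0})"

definition R1 :: "('v \<Rightarrow> 'v \<Rightarrow> 'v) \<Rightarrow> 'v::zero set \<Rightarrow> 'v set" where
  "R1 mult B = {r \<in> B. \<forall>b\<in>B. mult b r = 0}"

end

theory Submission imports Defs begin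

(*
  Let R_2(B) = {v \<in> B. B v \<subseteq> R_1(B)}.  As B is an ideal, R_1(B) and hence
  R_2(B) are stable under left multiplication by A.  Nilpotency of B together with
  dim B \<ge> 2 gives an element of R_2(B) outside span{z}, so z, S is a basis of R_2(B)
  for a nonempty independent set S.  The left stabiliser K = {a. a (span S) \<subseteq> span S}
  is a subalgebra; it is proper (some b \<in> B maps an element of S to a nonzero multiple
  of z), and K + B = A: the pairing B \<times> span S \<rightarrow> span{z} is nondegenerate on the
  right, so the z-components of a left multiplication on S are realised by an element
  of B.  Finally, in a finite-dimensional algebra a subalgebra supplementing a subset
  of \<Phi>(A) is the whole algebra (Frattini elements are non-generators).
*)

locale leibniz_alg = vector_space scale for scale :: "'k::field \<Rightarrow> 'v::ab_group_add \<Rightarrow> 'v" +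
  fixes mult :: "'v \<Rightarrow> 'v \<Rightarrow> 'v"
  assumes ladd: "mult (x + y) z = mult x z + mult y z"
    and radd: "mult x (y + z) = mult x y + mult x z"
    and lsc: "mult (scale c x) y = scale c (mult x y)"
    and rsc: "mult x (scale c y) = scale c (mult x y)"
    and leibniz: "mult x (mult y z) = mult (mult x y) z + mult y (mult x z)"

lemma leibniz_algebra_imp_locale:
  "leibniz_algebra scale mult \<Longrightarrow> leibniz_alg scale mult"
  unfolding leibniz_algebra_def leibniz_alg_def leibniz_alg_axioms_def by blast

context leibniz_alg
begin

lemma lzero[simp]: "mult 0 y = 0"
  using ladd[of 0 0 y] by simp

lemma rzero[simp]: "mult x 0 = 0"
  using radd[of x 0 0] by simp

lemma ldiff: "mult (x - y) z = mult x z - mult y z"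
  using ladd[of "x - y" y z] by (simp add: eq_diff_eq)

lemma rdiff: "mult x (y - z) = mult x y - mult x z"
  using radd[of x "y - z" z] by (simp add: eq_diff_eq)

lemma lsum: "mult (sum f S) y = (\<Sum>i\<in>S. mult (f i) y)"
  by (induction S rule: infinite_finite_induct) (auto simp: ladd)

lemma rsum: "mult y (sum f S) = (\<Sum>i\<in>S. mult y (f i))"
  by (induction S rule: infinite_finite_induct) (auto simp: radd)

end

context leibniz_alg
begin

lemma span_singleton_inter_span:
  assumes "independent (insert z S)" "z \<notin> S" "u \<in> span S" "u \<in> span {z}"
  shows "u = 0"
proof (rule ccontr)
  assume "u \<noteq> 0"
  obtain c where uc: "u = scale c z" using assms(4) by (auto simp: span_singleton)
  with \<open>u \<noteq> 0\<close> have "z = scale (inverse c) u" by auto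
  hence "z \<in> span S" using assms(3) span_scale by metis
  thus False using assms(1,2) by (simp add: independent_insert)
qed

lemma dim_one_imp_span_singleton:
  assumes "subspace X" "dim X = 1"
  obtains z where "z \<noteq> 0" "X = span {z}"
proof -
  obtain Xb where Xb: "Xb \<subseteq> X" "independent Xb" "X \<subseteq> span Xb"
    using maximal_independent_subset[of X] by blast
  have "card Xb = 1" using basis_card_eq_dim[OF Xb(1,3,2)] assms(2) by simp
  then obtain z where z: "Xb = {z}" by (rule card_1_singletonE)
  have "X = span {z}"
  proof
    show "X \<subseteq> span {z}" using Xb z by auto
    show "span {z} \<subseteq> X" using Xb z by (intro span_minimal[OF _ assms(1)]) auto
  qed
  moreover have "z \<noteq> 0" using Xb(2) z by simp
  ultimately show ?thesis using that by blast
qed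

lemma finite_dim_independent_finite:
  assumes "finite_dim scale" "independent S"
  shows "finite S"
proof -
  obtain Fs where "finite Fs" "span Fs = UNIV"
    using assms(1) unfolding finite_dim_def by blast
  then show ?thesis using independent_span_bound[OF _ assms(2)] by auto
qed

lemma extend_to_finite_basis:
  assumes "finite_dim scale" "z \<in> W" "z \<noteq> 0"
  obtains S where "finite S" "S \<subseteq> W" "z \<notin> S" "independent (insert z S)"
    "W \<subseteq> span (insert z S)"
proof -
  obtain S0 where S0: "{z} \<subseteq> S0" "S0 \<subseteq> W" "independent S0" "W \<subseteq> span S0"
    using maximal_independent_subset_extend[of "{z}" W] assms(2,3) by auto
  have "finite S0" using finite_dim_independent_finite[OF assms(1) S0(3)] .
  moreover have "S0 = insert z (S0 - {z})" using S0(1) by auto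
  ultimately show ?thesis using that[of "S0 - {z}"] S0 by auto
qed

end

context leibniz_alg
begin

lemma alg_power_subset:
  assumes "subalgebra scale mult B"
  shows "alg_power scale mult B n \<subseteq> B"
proof -
  have "alg_power scale mult B (Suc m) \<subseteq> B" for m
  proof (induction m)
    case (Suc m)
    then have "{mult b x |b x. b \<in> B \<and> x \<in> alg_power scale mult B (Suc m)} \<subseteq> B"
      using assms unfolding subalgebra_def by blast
    then show ?case
      using span_minimal assms unfolding subalgebra_def by simp
  qed simp
  then show ?thesis by (cases n) auto
qed

text \<open>If a nilpotent subalgebra B is not contained in a set Z containing 0, some element of
  B outside Z is mapped into Z by left multiplication with B: take the last lower central
  power of B not contained in Z.\<close>

lemma nilpotent_element_into:
  assumes "subalgebra scale mult B" "nilpotent_sub scale mult B" "0 \<in> Z" "\<not> B \<subseteq> Z"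
  obtains w where "w \<in> B" "w \<notin> Z" "\<And>b. b \<in> B \<Longrightarrow> mult b w \<in> Z"
proof -
  define P where "P k \<longleftrightarrow> 1 \<le> k \<and> alg_power scale mult B k \<subseteq> Z" for k
  obtain t where "t \<ge> 1" "alg_power scale mult B t = {0}"
    using assms(2) unfolding nilpotent_sub_def by blast
  then have "P t" using assms(3) unfolding P_def by auto
  define k where "k = (LEAST k. P k)"
  have Pk: "P k" unfolding k_def using \<open>P t\<close> by (rule LeastI)
  moreover have "k \<noteq> 1" using Pk assms(4) unfolding P_def by auto
  ultimately have "k \<ge> 2" unfolding P_def by auto
  then obtain j where kj: "k = Suc (Suc j)" by (metis add_2_eq_Suc le_Suc_ex)
  have "\<not> P (Suc j)" using kj not_less_Least[of "Suc j" P] unfolding k_def by auto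
  then obtain w where w: "w \<in> alg_power scale mult B (Suc j)" "w \<notin> Z"
    unfolding P_def by auto
  have "mult b w \<in> Z" if "b \<in> B" for b
  proof -
    have "mult b w \<in> alg_power scale mult B (Suc (Suc j))"
      using w(1) that by (auto intro: span_base)
    then show ?thesis using Pk kj unfolding P_def by auto
  qed
  moreover have "w \<in> B" using w(1) alg_power_subset[OF assms(1)] by auto
  ultimately show ?thesis using that w(2) by blast
qed

definition left_stabilizer :: "'v set \<Rightarrow> 'v set" where
  "left_stabilizer U = {a. \<forall>u\<in>U. mult a u \<in> U}"

text \<open>By the Leibniz identity (x y) u = x (y u) - y (x u), the left stabiliser of a subspace
  is a subalgebra.\<close>

lemma subalgebra_left_stabilizer:
  assumes U: "subspace U"
  shows "subalgebra scale mult (left_stabilizer U)"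
proof -
  have "subspace (left_stabilizer U)"
    using U unfolding left_stabilizer_def
    by (auto simp: subspace_def ladd lsc subspace_add subspace_scale)
  moreover have "mult x y \<in> left_stabilizer U"
    if "x \<in> left_stabilizer U" "y \<in> left_stabilizer U" for x y
  proof -
    have "mult (mult x y) u \<in> U" if "u \<in> U" for u
    proof -
      have "mult (mult x y) u = mult x (mult y u) - mult y (mult x u)"
        using leibniz[of x y u] by (simp add: eq_diff_eq)
      then show ?thesis
        using \<open>x \<in> _\<close> \<open>y \<in> _\<close> \<open>u \<in> U\<close> subspace_diff[OF U]
        unfolding left_stabilizer_def by auto
    qed
    then show ?thesis unfolding left_stabilizer_def by blast
  qed
  ultimately show ?thesis unfolding subalgebra_def by blast
qed

text \<open>In a finite-dimensional algebra every proper subalgebra lies in a maximal one: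
  take a proper subalgebra above it of largest dimension.\<close>

lemma exists_maximal_subalgebra:
  assumes "finite_dim scale" "subalgebra scale mult K" "K \<noteq> UNIV"
  obtains M where "maximal_subalgebra scale mult M" "K \<subseteq> M"
proof -
  obtain Bs where Bs: "independent Bs" "UNIV \<subseteq> span Bs"
    using maximal_independent_subset[of UNIV] by blast
  have "finite Bs" using finite_dim_independent_finite[OF assms(1) Bs(1)] .
  interpret F: finite_dimensional_vector_space scale Bs
    by unfold_locales (use Bs \<open>finite Bs\<close> in auto)
  define D where "D = {dim T | T. subalgebra scale mult T \<and> K \<subseteq> T \<and> T \<noteq> UNIV}"
  have "finite D"
    by (rule finite_subset[of _ "{..F.dimension}"]) (use F.dim_subset_UNIV in \<open>auto simp: D_def\<close>)
  moreover have "dim K \<in> D" using assms(2,3) D_def by auto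
  ultimately have "Max D \<in> D" by (intro Max_in) auto
  then obtain M where M: "subalgebra scale mult M" "K \<subseteq> M" "M \<noteq> UNIV" "Max D = dim M"
    unfolding D_def by blast
  have "T = M \<or> T = UNIV" if T: "subalgebra scale mult T" "M \<subseteq> T" for T
  proof (rule ccontr)
    assume TM: "\<not> (T = M \<or> T = UNIV)"
    then have "dim T \<in> D" unfolding D_def using T M(2) by blast
    then have "dim T \<le> dim M" using M(4)[symmetric] \<open>finite D\<close> by auto
    moreover have "dim M < dim T"
    proof (rule F.dim_psubset)
      have spans: "span M = M" "span T = T"
        using T(1) M(1) span_eq_iff unfolding subalgebra_def by blast+
      have "M \<subset> T" using T(2) TM by auto
      then show "span M \<subset> span T" unfolding spans .
    qed
    ultimately show False by simp
  qed
  then have "maximal_subalgebra scale mult M"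
    using M(1,3) unfolding maximal_subalgebra_def by blast
  then show ?thesis using that M(2) by blast
qed

lemma frattini_supplement:
  assumes "finite_dim scale" "subalgebra scale mult K" "B \<subseteq> frattini scale mult"
    and supplement: "\<And>a. \<exists>b\<in>B. a - b \<in> K"
  shows "K = UNIV"
proof (rule ccontr)
  assume "K \<noteq> UNIV"
  then obtain M where M: "maximal_subalgebra scale mult M" "K \<subseteq> M"
    using exists_maximal_subalgebra assms(1,2) by blast
  then have "B \<subseteq> M" "subspace M"
    using assms(3) unfolding frattini_def maximal_subalgebra_def subalgebra_def by auto
  have "a \<in> M" for a
  proof -
    obtain b where "b \<in> B" "a - b \<in> K" using supplement by blast
    then have "(a - b) + b \<in> M" using M(2) \<open>B \<subseteq> M\<close> subspace_add[OF \<open>subspace M\<close>] by blast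
    then show ?thesis by simp
  qed
  then show False using M(1) unfolding maximal_subalgebra_def by blast
qed

end

section \<open>A duality lemma\<close>

context leibniz_alg
begin

definition coeff :: "'v \<Rightarrow> 'v \<Rightarrow> 'k" where
  "coeff z v = (SOME c. v = scale c z)"

lemma coeff: "v \<in> span {z} \<Longrightarrow> scale (coeff z v) z = v"
proof -
  assume "v \<in> span {z}"
  then obtain c where "v = scale c z" by (auto simp: span_singleton)
  then show ?thesis unfolding coeff_def by (metis (mono_tags) someI)
qed

lemma coeff_swap:
  assumes "u \<in> span {z}" "v \<in> span {z}"
  shows "scale (coeff z u) v = scale (coeff z v) u"
proof -
  have "scale (coeff z u) v = scale (coeff z u * coeff z v) z"
    using coeff[OF assms(2)] by (metis scale_scale)
  also have "\<dots> = scale (coeff z v) u"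
    using coeff[OF assms(1)] by (metis mult.commute scale_scale)
  finally show ?thesis .
qed

text \<open>Inductive step: given a "dual basis" \<beta> of
  S, an element x outside span (z, S) is detected by some b0 \<in> B killing S.  Otherwise
  x minus its expansion along \<beta> would be annihilated by B, hence lie in span{z}.\<close>

lemma separating_element:
  assumes B: "subspace B"
    and R: "\<And>v. v \<in> B \<Longrightarrow> (\<forall>b\<in>B. mult b v = 0) \<Longrightarrow> v \<in> span {z}"
    and fin: "finite S" and SB: "S \<subseteq> B" and xB: "x \<in> B"
    and into: "\<And>v b. v \<in> insert x S \<Longrightarrow> b \<in> B \<Longrightarrow> mult b v \<in> span {z}"
    and \<beta>B: "\<And>s. s \<in> S \<Longrightarrow> \<beta> s \<in> B"
    and \<beta>: "\<And>s t. s \<in> S \<Longrightarrow> t \<in> S \<Longrightarrow> mult (\<beta> s) t = (if t = s then z else 0)"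
    and x: "x \<notin> span (insert z S)"
  shows "\<exists>b0\<in>B. (\<forall>s\<in>S. mult b0 s = 0) \<and> mult b0 x \<noteq> 0"
proof (rule ccontr)
  assume "\<not> ?thesis"
  then have kills: "\<And>b. b \<in> B \<Longrightarrow> \<forall>s\<in>S. mult b s = 0 \<Longrightarrow> mult b x = 0" by blast
  define x' where "x' = x - (\<Sum>s\<in>S. scale (coeff z (mult (\<beta> s) x)) s)"
  have "mult b x' = 0" if bB: "b \<in> B" for b
  proof -
    define b' where "b' = b - (\<Sum>s\<in>S. scale (coeff z (mult b s)) (\<beta> s))"
    have "mult b' t = 0" if "t \<in> S" for t
    proof -
      have "(\<Sum>s\<in>S. scale (coeff z (mult b s)) (mult (\<beta> s) t))
          = (\<Sum>s\<in>S. if t = s then scale (coeff z (mult b s)) z else 0)"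
        using \<beta> \<open>t \<in> S\<close> by (intro sum.cong) auto
      also have "\<dots> = mult b t"
        using fin \<open>t \<in> S\<close> coeff into bB by simp
      finally show ?thesis unfolding b'_def by (simp add: ldiff lsum lsc)
    qed
    moreover have "b' \<in> B" unfolding b'_def
      using \<beta>B bB by (intro subspace_diff[OF B] subspace_sum[OF B] subspace_scale[OF B]) auto
    ultimately have "mult b' x = 0" using kills by blast
    then have "mult b x = (\<Sum>s\<in>S. scale (coeff z (mult b s)) (mult (\<beta> s) x))"
      unfolding b'_def by (simp add: ldiff lsum lsc)
    also have "\<dots> = (\<Sum>s\<in>S. scale (coeff z (mult (\<beta> s) x)) (mult b s))"
      using into bB \<beta>B by (intro sum.cong refl coeff_swap) auto
    finally show "mult b x' = 0" unfolding x'_def by (simp add: rdiff rsum rsc)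
  qed
  moreover have "x' \<in> B" unfolding x'_def
    using SB xB by (intro subspace_diff[OF B] subspace_sum[OF B] subspace_scale[OF B]) auto
  ultimately have "x' \<in> span (insert z S)"
    using R span_mono[of "{z}" "insert z S"] by blast
  moreover have "(\<Sum>s\<in>S. scale (coeff z (mult (\<beta> s) x)) s) \<in> span (insert z S)"
    by (intro span_sum span_scale span_base) auto
  ultimately have "x \<in> span (insert z S)" unfolding x'_def by (metis diff_add_cancel span_add)
  with x show False ..
qed

lemma adjust_coefficient:
  assumes B: "subspace B"
    and b0: "b0 \<in> B" "\<forall>s\<in>S. mult b0 s = 0" "mult b0 x \<noteq> 0"
    and b1: "b1 \<in> B"
    and line: "mult b0 x \<in> span {z}" "mult b1 x \<in> span {z}"
  shows "\<exists>b\<in>B. (\<forall>s\<in>S. mult b s = mult b1 s) \<and> mult b x = scale c z"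
proof -
  have e0: "scale (coeff z (mult b0 x)) z = mult b0 x"
    and e1: "scale (coeff z (mult b1 x)) z = mult b1 x"
    using coeff line by auto
  with b0(3) have c0: "coeff z (mult b0 x) \<noteq> 0" by auto
  define k where "k = (c - coeff z (mult b1 x)) / coeff z (mult b0 x)"
  define b where "b = b1 + scale k b0"
  have "b \<in> B" unfolding b_def using b0(1) b1 B by (simp add: subspace_add subspace_scale)
  moreover have "\<forall>s\<in>S. mult b s = mult b1 s" using b0(2) by (simp add: b_def ladd lsc)
  moreover have "mult b x = scale c z"
  proof -
    have "mult b x = scale (coeff z (mult b1 x)) z + scale k (scale (coeff z (mult b0 x)) z)"
      by (simp only: b_def ladd lsc e0 e1)
    also have "\<dots> = scale (coeff z (mult b1 x) + k * coeff z (mult b0 x)) z"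
      by (simp add: scale_left_distrib)
    also have "coeff z (mult b1 x) + k * coeff z (mult b0 x) = c"
      using c0 by (simp add: k_def)
    finally show ?thesis .
  qed
  ultimately show ?thesis by blast
qed

lemma realize_coefficients:
  assumes B: "subspace B"
    and R: "\<And>v. v \<in> B \<Longrightarrow> (\<forall>b\<in>B. mult b v = 0) \<Longrightarrow> v \<in> span {z}"
  shows "finite S \<Longrightarrow> S \<subseteq> B \<Longrightarrow> (\<And>s b. s \<in> S \<Longrightarrow> b \<in> B \<Longrightarrow> mult b s \<in> span {z}) \<Longrightarrow>
    independent (insert z S) \<Longrightarrow> z \<notin> S \<Longrightarrow> \<exists>b\<in>B. \<forall>s\<in>S. mult b s = scale (c s) z"
proof (induction S arbitrary: c rule: finite_induct)
  case empty
  then show ?case using subspace_0[OF B] by blast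
next
  case (insert x S)
  have indep: "independent (insert z S)"
    using insert.prems(3) by (rule independent_mono) auto
  have IH: "\<And>c. \<exists>b\<in>B. \<forall>s\<in>S. mult b s = scale (c s) z"
    using insert.IH insert.prems indep by blast
  have "\<exists>\<beta>\<in>B. \<forall>t\<in>S. mult \<beta> t = (if t = s then z else 0)" for s
  proof -
    obtain \<beta> where "\<beta> \<in> B" "\<forall>t\<in>S. mult \<beta> t = scale (if t = s then 1 else 0) z"
      using IH[of "\<lambda>t. if t = s then 1 else 0"] by blast
    then show ?thesis by (intro bexI[of _ \<beta>]) auto
  qed
  then obtain \<beta> where \<beta>B: "\<And>s. \<beta> s \<in> B"
    and \<beta>: "\<And>s t. t \<in> S \<Longrightarrow> mult (\<beta> s) t = (if t = s then z else 0)"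
    by metis
  have "x \<notin> span (insert z S)"
    using insert.hyps(2) insert.prems(3,4) by (auto simp: independent_insert insert_commute)
  then obtain b0 where b0: "b0 \<in> B" "\<forall>s\<in>S. mult b0 s = 0" "mult b0 x \<noteq> 0"
    using separating_element[OF B R insert.hyps(1), of x \<beta>] insert.prems(1,2) \<beta>B \<beta>
    by auto
  obtain b1 where b1: "b1 \<in> B" "\<forall>s\<in>S. mult b1 s = scale (c s) z" using IH by blast
  have "mult b0 x \<in> span {z}" "mult b1 x \<in> span {z}"
    using insert.prems(1,2) b0(1) b1(1) by auto
  then obtain b where "b \<in> B" "\<forall>s\<in>S. mult b s = mult b1 s" "mult b x = scale (c x) z"
    using adjust_coefficient[OF B b0 b1(1)] by blast
  then show ?case using b1(2) by auto
qed

end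

section \<open>The right annihilators of an ideal\<close>

definition R2 :: "('v \<Rightarrow> 'v \<Rightarrow> 'v) \<Rightarrow> 'v::zero set \<Rightarrow> 'v set" where
  "R2 mult B = {v \<in> B. \<forall>b\<in>B. mult b v \<in> R1 mult B}"

context leibniz_alg
begin

lemma ideal_imp_subalgebra: "ideal scale mult B \<Longrightarrow> subalgebra scale mult B"
  unfolding ideal_def subalgebra_def by blast

lemma subspace_R1: "subspace B \<Longrightarrow> subspace (R1 mult B)"
  unfolding R1_def subspace_def by (auto simp: radd rsc)

lemma R1_subset_R2: "subspace B \<Longrightarrow> R1 mult B \<subseteq> R2 mult B"
  unfolding R2_def using subspace_0 subspace_R1 by (auto simp: R1_def)

text \<open>For an ideal B, R_1(B) is stable under left multiplication by the whole algebra: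
  b (a r) = (b a) r + a (b r) = 0 since b a \<in> B.\<close>

lemma R1_left_invariant:
  assumes ideal: "ideal scale mult B" and r: "r \<in> R1 mult B"
  shows "mult a r \<in> R1 mult B"
proof -
  have "mult b (mult a r) = 0" if "b \<in> B" for b
  proof -
    have "mult b a \<in> B" using ideal that unfolding ideal_def by blast
    then show ?thesis using r that unfolding leibniz[of b a r] R1_def by simp
  qed
  moreover have "mult a r \<in> B" using ideal r unfolding ideal_def R1_def by blast
  ultimately show ?thesis unfolding R1_def by blast
qed

lemma R2_left_invariant:
  assumes ideal: "ideal scale mult B" and v: "v \<in> R2 mult B"
  shows "mult a v \<in> R2 mult B"
proof -
  have sub: "subspace (R1 mult B)" using ideal subspace_R1 unfolding ideal_def by blast
  have "mult b (mult a v) \<in> R1 mult B" if "b \<in> B" for b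
  proof -
    have "mult b a \<in> B" using ideal that unfolding ideal_def by blast
    then have "mult (mult b a) v \<in> R1 mult B" using v unfolding R2_def by blast
    moreover have "mult a (mult b v) \<in> R1 mult B"
      using R1_left_invariant[OF ideal] v that unfolding R2_def by blast
    ultimately show ?thesis unfolding leibniz[of b a v] by (rule subspace_add[OF sub])
  qed
  moreover have "mult a v \<in> B" using ideal v unfolding ideal_def R2_def by blast
  ultimately show ?thesis unfolding R2_def by blast
qed

end

section \<open>A proper subalgebra supplementing B\<close>

context leibniz_alg
begin

context
  fixes B :: "'v set" and z :: 'v and S :: "'v set"
  assumes ideal: "ideal scale mult B"
    and R1_line: "R1 mult B = span {z}"
    and S: "S \<subseteq> R2 mult B" "z \<notin> S" "independent (insert z S)"
begin

lemma S_subset_B: "S \<subseteq> B"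
  using S(1) unfolding R2_def by auto

lemma B_maps_S_into_line: "s \<in> S \<Longrightarrow> b \<in> B \<Longrightarrow> mult b s \<in> span {z}"
  using S(1) R1_line unfolding R2_def by auto

text \<open>If S is nonempty, its left stabiliser is proper: some b \<in> B maps an element of S
  to a nonzero multiple of z, which does not lie in span S.\<close>

lemma left_stabilizer_proper:
  assumes "S \<noteq> {}"
  shows "left_stabilizer (span S) \<noteq> UNIV"
proof
  assume stab: "left_stabilizer (span S) = UNIV"
  obtain s where s: "s \<in> S" using assms by blast
  have "s \<notin> span {z}"
    using span_singleton_inter_span[OF S(3,2) span_base[OF s]] s S(3)
    by (metis dependent_zero insert_iff)
  then obtain b where b: "b \<in> B" "mult b s \<noteq> 0"
    using s S_subset_B R1_line unfolding R1_def by blast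
  have "mult b s \<in> span S" using stab s span_base unfolding left_stabilizer_def by blast
  then show False
    using span_singleton_inter_span[OF S(3,2)] B_maps_S_into_line s b by blast
qed

text \<open>If z, S spans R_2(B), the left stabiliser of span S supplements B: for any a, the
  z-components of a s (s \<in> S) are realised by some b \<in> B, and then a - b stabilises span S.\<close>

lemma left_stabilizer_supplements:
  assumes "finite S" "R2 mult B \<subseteq> span (insert z S)"
  shows "\<exists>b\<in>B. a - b \<in> left_stabilizer (span S)"
proof -
  have "\<exists>c. mult a s - scale c z \<in> span S" if "s \<in> S" for s
    using R2_left_invariant[OF ideal] S(1) assms(2) that span_breakdown_eq by blast
  then obtain c where c: "\<And>s. s \<in> S \<Longrightarrow> mult a s - scale (c s) z \<in> span S" by metis
  have "subspace B" using ideal unfolding ideal_def by blast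
  moreover have "v \<in> span {z}" if "v \<in> B" "\<forall>b\<in>B. mult b v = 0" for v
    using that R1_line unfolding R1_def by blast
  ultimately obtain b where b: "b \<in> B" "\<forall>s\<in>S. mult b s = scale (c s) z"
    using realize_coefficients[of B z, OF _ _ assms(1) S_subset_B B_maps_S_into_line S(3,2)]
    by blast
  have "mult (a - b) u \<in> span S" if "u \<in> span S" for u
    using that
  proof (induction rule: span_induct)
    case base
    show ?case by (auto simp: subspace_def radd rsc span_add span_scale span_zero)
  next
    case (step s)
    then show ?case using c b by (simp add: ldiff)
  qed
  then show ?thesis using b(1) unfolding left_stabilizer_def by auto
qed

end

end

theorem mainTheorem16:
  fixes scale :: "'k::field \<Rightarrow> 'v::ab_group_add \<Rightarrow> 'v"
    and mult :: "'v \<Rightarrow> 'v \<Rightarrow> 'v"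
    and B :: "'v set"
  assumes "leibniz_algebra scale mult"
    and "finite_dim scale"
    and "ideal scale mult B"
    and "nilpotent_sub scale mult B"
    and "vector_space.dim scale B \<ge> 2"
    and "vector_space.dim scale (R1 mult B) = 1"
  shows "\<not> B \<subseteq> frattini scale mult"
proof
  assume frattini: "B \<subseteq> frattini scale mult"
  interpret leibniz_alg scale mult using assms(1) by (rule leibniz_algebra_imp_locale)
  have subB: "subspace B" using assms(3) unfolding ideal_def by blast
  obtain z where z: "z \<noteq> 0" "R1 mult B = span {z}"
    using dim_one_imp_span_singleton[OF subspace_R1[OF subB] assms(6)] by blast
  have "\<not> B \<subseteq> span {z}"
  proof
    assume "B \<subseteq> span {z}"
    then have "B = R1 mult B" using z(2) unfolding R1_def by auto
    then show False using assms(5,6) by simp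
  qed
  then obtain w where w: "w \<in> B" "w \<notin> span {z}" "\<And>b. b \<in> B \<Longrightarrow> mult b w \<in> span {z}"
    using nilpotent_element_into[OF ideal_imp_subalgebra[OF assms(3)] assms(4) span_zero]
    by blast
  have "z \<in> R2 mult B" using R1_subset_R2[OF subB] z(2) span_base by blast
  then obtain S where S: "finite S" "S \<subseteq> R2 mult B" "z \<notin> S" "independent (insert z S)"
    "R2 mult B \<subseteq> span (insert z S)"
    using extend_to_finite_basis[OF assms(2) _ z(1)] by blast
  have "w \<in> R2 mult B" using w z(2) unfolding R2_def by auto
  then have "S \<noteq> {}" using w(2) S(5) by auto
  define K where "K = left_stabilizer (span S)"
  have "K = UNIV"
    using frattini_supplement[OF assms(2) _ frattini] subalgebra_left_stabilizer[of "span S"]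
      left_stabilizer_supplements[OF assms(3) z(2) S(2-4) S(1,5)]
    unfolding K_def by (simp add: subspace_span)
  with left_stabilizer_proper[OF assms(3) z(2) S(2-4) \<open>S \<noteq> {}\<close>] show False
    unfolding K_def by blast
qed

end
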